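(* Let $M^2$ be a surface in $\mathbb E^4$ without flat points, i.e. $(k,\varkappa)\neq(0,0)$ at every point. Then at any point $p$ the mean curvature vector $H=\frac12\operatorname{tr}\sigma$ vanishes if and only if $\varkappa^2-k=0$ at $p$. In particular, $M^2$ is minimal if and only if $\varkappa^2-k=0$ on $M^2$.
   Context: $\mathbb E^4$ carries the standard metric $g$. For a surface $M^2$ parametrized by $z(u,v)$, with $E=g(z_u,z_u)$, $F=g(z_u,z_v)$, $G=g(z_v,z_v)$, $W=\sqrt{EG-F^2}$, second fundamental form $\sigma$, and an orthonormal normal frame $\{e_1,e_2\}$, write $\sigma(z_u,z_u)=c_{11}^1e_1+c_{11}^2e_2$, $\sigma(z_u,z_v)=c_{12}^1e_1+c_{12}^2e_2$, $\sigma(z_v,z_v)=c_{22}^1e_1+c_{22}^2e_2$; put $\Delta_1=c_{11}^1c_{12}^2-c_{11}^2c_{12}^1$, $\Delta_2=c_{11}^1c_{22}^2-c_{11}^2c_{22}^1$, $\Delta_3=c_{12}^1c_{22}^2-c_{12}^2c_{22}^1$, $L=2\Delta_1/W$, $M=\Delta_2/W$, $N=2\Delta_3/W$, and $k=\frac{LN-M^2}{EG-F^2}$, $\varkappa=\frac{EN+GL-2FM}{2(EG-F^2)}$ (these are independent of parametrization and normal frame, $\varkappa$ up to sign). A point is flat if $k=\varkappa=0$. *)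

theory Defs
  imports "HOL-Analysis.Analysis"
begin

definition pu :: "(real \<times> real \<Rightarrow> 'a::real_normed_vector) \<Rightarrow> real \<times> real \<Rightarrow> 'a" where
  "pu f p = vector_derivative (\<lambda>t. f (t, snd p)) (at (fst p))"

definition pv :: "(real \<times> real \<Rightarrow> 'a::real_normed_vector) \<Rightarrow> real \<times> real \<Rightarrow> 'a" where
  "pv f p = vector_derivative (\<lambda>t. f (fst p, t)) (at (snd p))"

definition has_partials :: "(real \<times> real) set \<Rightarrow> (real \<times> real \<Rightarrow> 'a::real_normed_vector) \<Rightarrow> bool" where
  "has_partials U f \<longleftrightarrow> (\<forall>p\<in>U. (\<lambda>t. f (t, snd p)) differentiable (at (fst p))
                              \<and> (\<lambda>t. f (fst p, t)) differentiable (at (snd p)))"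

definition C2_param :: "(real \<times> real) set \<Rightarrow> (real \<times> real \<Rightarrow> real^4) \<Rightarrow> bool" where
  "C2_param U z \<longleftrightarrow> open U \<and> has_partials U z \<and> has_partials U (pu z) \<and> has_partials U (pv z)
     \<and> continuous_on U z \<and> continuous_on U (pu z) \<and> continuous_on U (pv z)
     \<and> continuous_on U (pu (pu z)) \<and> continuous_on U (pv (pu z))
     \<and> continuous_on U (pu (pv z)) \<and> continuous_on U (pv (pv z))"

definition EE :: "(real \<times> real \<Rightarrow> real^4) \<Rightarrow> real \<times> real \<Rightarrow> real" where
  "EE z p = pu z p \<bullet> pu z p"
definition FF :: "(real \<times> real \<Rightarrow> real^4) \<Rightarrow> real \<times> real \<Rightarrow> real" where
  "FF z p = pu z p \<bullet> pv z p"
definition GG :: "(real \<times> real \<Rightarrow> real^4) \<Rightarrow> real \<times> real \<Rightarrow> real" where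
  "GG z p = pv z p \<bullet> pv z p"
definition WW :: "(real \<times> real \<Rightarrow> real^4) \<Rightarrow> real \<times> real \<Rightarrow> real" where
  "WW z p = sqrt (EE z p * GG z p - (FF z p)\<^sup>2)"

definition regular_surface :: "(real \<times> real) set \<Rightarrow> (real \<times> real \<Rightarrow> real^4) \<Rightarrow> bool" where
  "regular_surface U z \<longleftrightarrow> C2_param U z \<and> (\<forall>p\<in>U. EE z p * GG z p - (FF z p)\<^sup>2 > 0)"

definition normal_frame :: "(real \<times> real) set \<Rightarrow> (real \<times> real \<Rightarrow> real^4) \<Rightarrow>
    (real \<times> real \<Rightarrow> real^4) \<Rightarrow> (real \<times> real \<Rightarrow> real^4) \<Rightarrow> bool" where
  "normal_frame U z e1 e2 \<longleftrightarrow> (\<forall>p\<in>U. e1 p \<bullet> e1 p = 1 \<and> e2 p \<bullet> e2 p = 1 \<and> e1 p \<bullet> e2 p = 0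
      \<and> e1 p \<bullet> pu z p = 0 \<and> e1 p \<bullet> pv z p = 0 \<and> e2 p \<bullet> pu z p = 0 \<and> e2 p \<bullet> pv z p = 0)"

definition normal_part :: "(real \<times> real \<Rightarrow> real^4) \<Rightarrow> (real \<times> real \<Rightarrow> real^4) \<Rightarrow>
    real \<times> real \<Rightarrow> real^4 \<Rightarrow> real^4" where
  "normal_part e1 e2 p X = (X \<bullet> e1 p) *\<^sub>R e1 p + (X \<bullet> e2 p) *\<^sub>R e2 p"

definition sigma11 where "sigma11 z e1 e2 p = normal_part e1 e2 p (pu (pu z) p)"
definition sigma12 where "sigma12 z e1 e2 p = normal_part e1 e2 p (pv (pu z) p)"
definition sigma22 where "sigma22 z e1 e2 p = normal_part e1 e2 p (pv (pv z) p)"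

definition c11_1 where "c11_1 z e1 e2 p = sigma11 z e1 e2 p \<bullet> e1 p"
definition c11_2 where "c11_2 z e1 e2 p = sigma11 z e1 e2 p \<bullet> e2 p"
definition c12_1 where "c12_1 z e1 e2 p = sigma12 z e1 e2 p \<bullet> e1 p"
definition c12_2 where "c12_2 z e1 e2 p = sigma12 z e1 e2 p \<bullet> e2 p"
definition c22_1 where "c22_1 z e1 e2 p = sigma22 z e1 e2 p \<bullet> e1 p"
definition c22_2 where "c22_2 z e1 e2 p = sigma22 z e1 e2 p \<bullet> e2 p"

definition Delta1 where "Delta1 z e1 e2 p = c11_1 z e1 e2 p * c12_2 z e1 e2 p - c11_2 z e1 e2 p * c12_1 z e1 e2 p"
definition Delta2 where "Delta2 z e1 e2 p = c11_1 z e1 e2 p * c22_2 z e1 e2 p - c11_2 z e1 e2 p * c22_1 z e1 e2 p"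
definition Delta3 where "Delta3 z e1 e2 p = c12_1 z e1 e2 p * c22_2 z e1 e2 p - c12_2 z e1 e2 p * c22_1 z e1 e2 p"

definition LL where "LL z e1 e2 p = 2 * Delta1 z e1 e2 p / WW z p"
definition MM where "MM z e1 e2 p = Delta2 z e1 e2 p / WW z p"
definition NN where "NN z e1 e2 p = 2 * Delta3 z e1 e2 p / WW z p"

definition curv_k :: "(real \<times> real \<Rightarrow> real^4) \<Rightarrow> (real \<times> real \<Rightarrow> real^4) \<Rightarrow>
    (real \<times> real \<Rightarrow> real^4) \<Rightarrow> real \<times> real \<Rightarrow> real" where
  "curv_k z e1 e2 p = (LL z e1 e2 p * NN z e1 e2 p - (MM z e1 e2 p)\<^sup>2)
                       / (EE z p * GG z p - (FF z p)\<^sup>2)"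

definition curv_kappa :: "(real \<times> real \<Rightarrow> real^4) \<Rightarrow> (real \<times> real \<Rightarrow> real^4) \<Rightarrow>
    (real \<times> real \<Rightarrow> real^4) \<Rightarrow> real \<times> real \<Rightarrow> real" where
  "curv_kappa z e1 e2 p = (EE z p * NN z e1 e2 p + GG z p * LL z e1 e2 p - 2 * FF z p * MM z e1 e2 p)
                       / (2 * (EE z p * GG z p - (FF z p)\<^sup>2))"

text \<open>Mean curvature vector H = (1/2) tr sigma, the trace taken w.r.t. the induced metric
  (inverse metric g^{ij} = [[G,-F],[-F,E]]/(EG-F^2)).\<close>
definition mean_curv :: "(real \<times> real \<Rightarrow> real^4) \<Rightarrow> (real \<times> real \<Rightarrow> real^4) \<Rightarrow>
    (real \<times> real \<Rightarrow> real^4) \<Rightarrow> real \<times> real \<Rightarrow> real^4" where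
  "mean_curv z e1 e2 p = (1 / (2 * (EE z p * GG z p - (FF z p)\<^sup>2))) *\<^sub>R
      (GG z p *\<^sub>R sigma11 z e1 e2 p - (2 * FF z p) *\<^sub>R sigma12 z e1 e2 p + EE z p *\<^sub>R sigma22 z e1 e2 p)"

definition flat_point where
  "flat_point z e1 e2 p \<longleftrightarrow> curv_k z e1 e2 p = 0 \<and> curv_kappa z e1 e2 p = 0"

end

theory Submission
  imports Defs
begin

(* At a point p, write sigma(z_u,z_u), sigma(z_u,z_v), sigma(z_v,z_v) as
   (a1,b1), (a2,b2), (a3,b3) in the orthonormal normal frame, let D = EG - F^2 > 0 and
   x = Delta1, y = Delta2, w = Delta3 be the 2x2 minors.  Then
     kappa = (Ew + Gx - Fy)/(D W),   k = (4xw - y^2)/(D W^2),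
   so kappa^2 - k = Q/(D^2 W^2) with Q = (Ew + Gx - Fy)^2 - D(4xw - y^2), and
     E^2 Q = (E(Ew - Gx) - F(Ey - 2Fx))^2 + D (Ey - 2Fx)^2,
   a sum of squares.  Hence kappa^2 = k iff Ey = 2Fx and Ew = Gx.
   On the other hand 2D H = t1 e1 + t2 e2 with t = G sigma11 - 2F sigma12 + E sigma22, and the
   minors of t against the columns satisfy  t1 b2 - t2 a2 = Gx - Ew,  a1 t2 - b1 t1 = Ey - 2Fx.
   So H = 0 forces the two linear relations, and conversely the relations give t1 x = t2 x = 0;
   at a non-flat point these relations force x <> 0, whence H = 0.
   The file first proves these algebraic facts for arbitrary reals, then the facts about
   orthonormal frames, then the pointwise equivalence, and finally the theorem. *)

lemma discriminant_sum_of_squares: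
  fixes E F G x y w :: real
  shows "E^2 * ((E*w + G*x - F*y)^2 - (E*G - F^2) * (4*x*w - y^2))
         = (E*(E*w - G*x) - F*(E*y - 2*F*x))^2 + (E*G - F^2) * (E*y - 2*F*x)^2"
  by (simp add: algebra_simps power2_eq_square)

lemma discriminant_zero_iff:
  fixes E F G x y w :: real
  assumes D: "E*G - F^2 > 0" and E: "E > 0"
  shows "(E*w + G*x - F*y)^2 - (E*G - F^2) * (4*x*w - y^2) = 0
         \<longleftrightarrow> E*y = 2*F*x \<and> E*w = G*x"
proof -
  let ?A = "E*(E*w - G*x) - F*(E*y - 2*F*x)" and ?B = "E*y - 2*F*x"
  have "(E*w + G*x - F*y)^2 - (E*G - F^2) * (4*x*w - y^2) = 0 \<longleftrightarrow> ?A^2 + (E*G - F^2) * ?B^2 = 0"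
    using discriminant_sum_of_squares[of E w G x F y, symmetric] E by simp
  also have "\<dots> \<longleftrightarrow> ?A = 0 \<and> ?B = 0"
    using D by (simp add: add_nonneg_eq_0_iff)
  also have "\<dots> \<longleftrightarrow> E*y = 2*F*x \<and> E*w = G*x"
    using E by auto
  finally show ?thesis .
qed

text \<open>Normal curvature and Gauss-type curvature written through the minors x, y, w
  (with \<open>L = 2x/W\<close>, \<open>M = y/W\<close>, \<open>N = 2w/W\<close> and \<open>W^2 = D\<close>):
  \<open>kappa^2 - k\<close> is the discriminant divided by the positive number \<open>D^2 W^2\<close>.\<close>
lemma kappa_sq_minus_k:
  fixes E F G W x y w :: real
  assumes D: "E*G - F^2 > 0" and W: "W = sqrt (E*G - F^2)"
  shows "(E*(2*w/W) + G*(2*x/W) - 2*F*(y/W)) / (2*(E*G - F^2))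
           = (E*w + G*x - F*y) / ((E*G - F^2) * W)"
    and "((E*(2*w/W) + G*(2*x/W) - 2*F*(y/W)) / (2*(E*G - F^2)))^2
           - ((2*x/W)*(2*w/W) - (y/W)^2) / (E*G - F^2)
         = ((E*w + G*x - F*y)^2 - (E*G - F^2) * (4*x*w - y^2)) / ((E*G - F^2)^2 * W^2)"
proof -
  define Dt where "Dt = E*G - F^2"
  have Wpos: "W > 0" using D W by simp
  show kap: "(E*(2*w/W) + G*(2*x/W) - 2*F*(y/W)) / (2*(E*G - F^2))
           = (E*w + G*x - F*y) / ((E*G - F^2) * W)"
    using Wpos D by (simp add: field_simps)
  have "Dt > 0" using D unfolding Dt_def .
  then have k: "((2*x/W)*(2*w/W) - (y/W)^2) / Dt = Dt * (4*x*w - y^2) / (Dt^2 * W^2)"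
    using Wpos by (simp add: field_simps power2_eq_square)
  have "((E*(2*w/W) + G*(2*x/W) - 2*F*(y/W)) / (2*Dt))^2 = (E*w + G*x - F*y)^2 / (Dt^2 * W^2)"
    using kap unfolding Dt_def[symmetric] by (simp add: power_divide power_mult_distrib)
  then show "((E*(2*w/W) + G*(2*x/W) - 2*F*(y/W)) / (2*(E*G - F^2)))^2
           - ((2*x/W)*(2*w/W) - (y/W)^2) / (E*G - F^2)
         = ((E*w + G*x - F*y)^2 - (E*G - F^2) * (4*x*w - y^2)) / ((E*G - F^2)^2 * W^2)"
    unfolding Dt_def[symmetric] k by (simp add: diff_divide_distrib)
qed

lemma trace_minor_identities:
  fixes E F G a1 a2 a3 b1 b2 b3 :: real
  defines "t1 \<equiv> G*a1 - 2*F*a2 + E*a3" and "t2 \<equiv> G*b1 - 2*F*b2 + E*b3"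
  shows "t1*b2 - t2*a2 = G*(a1*b2 - b1*a2) - E*(a2*b3 - b2*a3)"
    and "a1*t2 - b1*t1 = E*(a1*b3 - b1*a3) - 2*F*(a1*b2 - b1*a2)"
  unfolding t1_def t2_def by (simp_all add: algebra_simps)

lemma proportional_to_columns:
  fixes t1 t2 a1 a2 b1 b2 :: real
  assumes "t1*b2 = t2*a2" and "a1*t2 = b1*t1"
  shows "t1 * (a1*b2 - b1*a2) = 0" and "t2 * (a1*b2 - b1*a2) = 0"
proof -
  have "t1 * (a1*b2 - b1*a2) = a1*(t1*b2) - (b1*t1)*a2" by (simp add: algebra_simps)
  also have "\<dots> = 0" using assms by simp
  finally show "t1 * (a1*b2 - b1*a2) = 0" .
  have "t2 * (a1*b2 - b1*a2) = (a1*t2)*b2 - b1*(t2*a2)" by (simp add: algebra_simps)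
  also have "\<dots> = 0" using assms by simp
  finally show "t2 * (a1*b2 - b1*a2) = 0" .
qed

lemma trace_zero_iff_kappa_sq_eq_k:
  fixes E F G a1 a2 a3 b1 b2 b3 :: real
  assumes D: "E*G - F^2 > 0" and E: "E \<ge> 0"
  defines "W \<equiv> sqrt (E*G - F^2)"
  defines "x \<equiv> a1*b2 - b1*a2" and "y \<equiv> a1*b3 - b1*a3" and "w \<equiv> a2*b3 - b2*a3"
  defines "k \<equiv> ((2*x/W)*(2*w/W) - (y/W)^2) / (E*G - F^2)"
      and "kap \<equiv> (E*(2*w/W) + G*(2*x/W) - 2*F*(y/W)) / (2*(E*G - F^2))"
  assumes not_flat: "\<not> (k = 0 \<and> kap = 0)"
  shows "(G*a1 - 2*F*a2 + E*a3 = 0 \<and> G*b1 - 2*F*b2 + E*b3 = 0) \<longleftrightarrow> kap^2 - k = 0"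
proof -
  define t1 where "t1 = G*a1 - 2*F*a2 + E*a3"
  define t2 where "t2 = G*b1 - 2*F*b2 + E*b3"
  have Epos: "E > 0" using D E by (cases "E = 0") (auto simp: power2_eq_square)
  have minors: "t1*b2 - t2*a2 = G*x - E*w" "a1*t2 - b1*t1 = E*y - 2*F*x"
    unfolding t1_def t2_def x_def y_def w_def by (rule trace_minor_identities)+
  have Wpos: "W > 0" using D unfolding W_def by simp
  have "kap^2 - k = 0 \<longleftrightarrow> E*y = 2*F*x \<and> E*w = G*x"
    using kappa_sq_minus_k(2)[OF D W_def[THEN meta_eq_to_obj_eq], of w x y]
      discriminant_zero_iff[OF D Epos, of w x y] D Wpos
    unfolding k_def kap_def by simp
  moreover have "t1 = 0 \<and> t2 = 0 \<longleftrightarrow> E*y = 2*F*x \<and> E*w = G*x"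
  proof
    assume "t1 = 0 \<and> t2 = 0"
    then show "E*y = 2*F*x \<and> E*w = G*x"
      using minors by simp
  next
    assume rel: "E*y = 2*F*x \<and> E*w = G*x"
    have "x \<noteq> 0"
    proof
      assume "x = 0"
      with rel Epos have "y = 0" "w = 0" by simp_all
      with \<open>x = 0\<close> have "k = 0 \<and> kap = 0" unfolding k_def kap_def by simp
      with not_flat show False ..
    qed
    moreover have "t1*b2 = t2*a2" "a1*t2 = b1*t1"
      using rel minors by simp_all
    ultimately show "t1 = 0 \<and> t2 = 0"
      using proportional_to_columns[of t1 b2 t2 a2 a1 b1] unfolding x_def by simp
  qed
  ultimately show ?thesis unfolding t1_def t2_def by simp
qed

lemma orthonormal_combination_eq_0:
  fixes u v :: "'a::real_inner"
  assumes "u \<bullet> u = 1" "v \<bullet> v = 1" "u \<bullet> v = 0"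
  shows "a *\<^sub>R u + b *\<^sub>R v = 0 \<longleftrightarrow> a = 0 \<and> b = 0"
proof
  assume "a *\<^sub>R u + b *\<^sub>R v = 0"
  then have "(a *\<^sub>R u + b *\<^sub>R v) \<bullet> u = 0" "(a *\<^sub>R u + b *\<^sub>R v) \<bullet> v = 0" by simp_all
  then show "a = 0 \<and> b = 0"
    using assms by (simp add: inner_add_left inner_commute[of v u])
qed simp

lemma normal_part_components:
  assumes "e1 p \<bullet> e1 p = 1" "e2 p \<bullet> e2 p = 1" "e1 p \<bullet> e2 p = 0"
  shows "normal_part e1 e2 p X \<bullet> e1 p = X \<bullet> e1 p" "normal_part e1 e2 p X \<bullet> e2 p = X \<bullet> e2 p"
  using assms by (simp_all add: normal_part_def inner_add_left inner_commute[of "e2 p" "e1 p"])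

lemma mean_curv_zero_iff_pointwise:
  fixes z e1 e2 :: "real \<times> real \<Rightarrow> real^4"
  assumes D: "EE z p * GG z p - (FF z p)\<^sup>2 > 0"
    and frame: "e1 p \<bullet> e1 p = 1" "e2 p \<bullet> e2 p = 1" "e1 p \<bullet> e2 p = 0"
    and not_flat: "\<not> flat_point z e1 e2 p"
  shows "mean_curv z e1 e2 p = 0 \<longleftrightarrow> (curv_kappa z e1 e2 p)\<^sup>2 - curv_k z e1 e2 p = 0"
proof -
  define E F G where "E = EE z p" and "F = FF z p" and "G = GG z p"
  define a1 b1 where "a1 = c11_1 z e1 e2 p" and "b1 = c11_2 z e1 e2 p"
  define a2 b2 where "a2 = c12_1 z e1 e2 p" and "b2 = c12_2 z e1 e2 p"
  define a3 b3 where "a3 = c22_1 z e1 e2 p" and "b3 = c22_2 z e1 e2 p"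
  note components = normal_part_components[of e1 p e2, OF frame]
  have "sigma11 z e1 e2 p = a1 *\<^sub>R e1 p + b1 *\<^sub>R e2 p"
    "sigma12 z e1 e2 p = a2 *\<^sub>R e1 p + b2 *\<^sub>R e2 p"
    "sigma22 z e1 e2 p = a3 *\<^sub>R e1 p + b3 *\<^sub>R e2 p"
    unfolding a1_def a2_def a3_def b1_def b2_def b3_def c11_1_def c11_2_def c12_1_def
      c12_2_def c22_1_def c22_2_def sigma11_def sigma12_def sigma22_def components
    by (simp_all add: normal_part_def)
  then have "G *\<^sub>R sigma11 z e1 e2 p - (2 * F) *\<^sub>R sigma12 z e1 e2 p + E *\<^sub>R sigma22 z e1 e2 p
        = (G*a1 - 2*F*a2 + E*a3) *\<^sub>R e1 p + (G*b1 - 2*F*b2 + E*b3) *\<^sub>R e2 p"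
    by (simp add: algebra_simps)
  then have "mean_curv z e1 e2 p = 0 \<longleftrightarrow> G*a1 - 2*F*a2 + E*a3 = 0 \<and> G*b1 - 2*F*b2 + E*b3 = 0"
    unfolding mean_curv_def using D orthonormal_combination_eq_0[OF frame]
    by (simp add: E_def F_def G_def)
  also have "\<dots> \<longleftrightarrow> (curv_kappa z e1 e2 p)\<^sup>2 - curv_k z e1 e2 p = 0"
    using trace_zero_iff_kappa_sq_eq_k[of E G F a1 b2 b1 a2 b3 a3] D not_flat
    unfolding curv_kappa_def curv_k_def flat_point_def LL_def MM_def NN_def
      Delta1_def Delta2_def Delta3_def WW_def E_def F_def G_def
      a1_def a2_def a3_def b1_def b2_def b3_def EE_def
    by simp
  finally show ?thesis .
qed

theorem proposition4p1:
  fixes U :: "(real \<times> real) set" and z e1 e2 :: "real \<times> real \<Rightarrow> real^4"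
  assumes "regular_surface U z"
    and "normal_frame U z e1 e2"
    and "\<forall>p\<in>U. \<not> flat_point z e1 e2 p"
  shows "(\<forall>p\<in>U. mean_curv z e1 e2 p = 0 \<longleftrightarrow> (curv_kappa z e1 e2 p)\<^sup>2 - curv_k z e1 e2 p = 0)
       \<and> ((\<forall>p\<in>U. mean_curv z e1 e2 p = 0) \<longleftrightarrow> (\<forall>p\<in>U. (curv_kappa z e1 e2 p)\<^sup>2 - curv_k z e1 e2 p = 0))"
proof -
  have pointwise: "mean_curv z e1 e2 p = 0 \<longleftrightarrow> (curv_kappa z e1 e2 p)\<^sup>2 - curv_k z e1 e2 p = 0"
    if "p \<in> U" for p
    using assms that
    by (intro mean_curv_zero_iff_pointwise) (auto simp: regular_surface_def normal_frame_def)
  then show ?thesis by blast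
qed

end
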